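(* Fix a thresholding parameter $\omega>0$ and let $\theta$ be a real-valued random variable with some distribution $\mathcal{P}_\theta$. For a relaxing parameter $\xi^2>0$, let $\tilde\theta$ be a random variable with $\tilde\theta \mid \theta \sim \mathrm{N}(\theta,\xi^2)$, and define $T_r(\theta,\omega,\xi^2)=\theta\cdot I(|\tilde\theta|>\omega)$ (relaxed thresholding), $T_h(\theta,\omega)=\theta\cdot I(|\theta|>\omega)$ (hard thresholding), and $T_s(\theta,\omega)=\operatorname{sgn}(\theta)(|\theta|-\omega)\cdot I(|\theta|>\omega)$ (soft thresholding), where $I(\cdot)$ is the indicator function. Let $\theta^\star=\theta+\omega$ when $\theta>0$ and $\theta^\star=\theta-\omega$ when $\theta<0$. Then for any $\epsilon>0$ there exist values of $\xi^2$ such that $\Pr\left(|T_r(\theta,\omega,\xi^2)-T_h(\theta,\omega)|<\epsilon\right)>0$, $\Pr\left(|T_r(\theta,\omega,\xi^2)-\theta|<\epsilon\right)>0$, and $\Pr\left(|T_r(\theta,\omega,\xi^2)-T_s(\theta^\star,\omega)|<\epsilon\right)>0$. Furthermore, $\lim_{\xi^2\to 0}T_r(\theta,\omega,\xi^2)=T_h(\theta,\omega)$ and $\lim_{\xi^2\to\infty}T_r(\theta,\omega,\xi^2)=\theta$.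
   Context: This is the scalar version of the relaxed-thresholded Gaussian process: given a kernel $\kappa$, $\omega\ge 0$ and $\xi>0$, if $f\sim\mathrm{GP}(0,\kappa)$ and $\tilde f(x)\sim\mathrm{N}(f(x),\xi^2)$ independently across $x$, then $g(x)=f(x)I(|\tilde f(x)|>\omega)$ is called a relaxed-thresholded Gaussian process. Here $\theta$ plays the role of $f(x)$ and $\tilde\theta$ the role of $\tilde f(x)$; $\xi^2$ is the relaxing parameter. *)

theory Defs
  imports "HOL-Probability.Probability"
begin

definition hard_thr :: "real \<Rightarrow> real \<Rightarrow> real" where
  "hard_thr w t = t * (if \<bar>t\<bar> > w then 1 else 0)"

definition soft_thr :: "real \<Rightarrow> real \<Rightarrow> real" where
  "soft_thr w t = sgn t * (\<bar>t\<bar> - w) * (if \<bar>t\<bar> > w then 1 else 0)"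

text \<open>Relaxed thresholding  T_r = t * I(|tt| > w), where tt is the relaxed
  (noisy) copy of t.\<close>
definition relaxed_thr :: "real \<Rightarrow> real \<Rightarrow> real \<Rightarrow> real" where
  "relaxed_thr w t tt = t * (if \<bar>tt\<bar> > w then 1 else 0)"

definition theta_star :: "real \<Rightarrow> real \<Rightarrow> real" where
  "theta_star w t = (if t > 0 then t + w else if t < 0 then t - w else t)"

end

theory Submission
  imports Defs
begin

(* With xi2 = 1, for every fixed value t of theta each of the three events contains the event
   that Z lies in a suitable nonempty interval; since Z has a positive density and is independent
   of theta, integrating over the law of theta (the joint law is the product of the marginals)
   gives positive probability. Soft thresholding undoes theta_star, so the third event is the
   second one. The limits hold pointwise: as xi2 tends to 0 the relaxed copy tends to theta,
   which decides the threshold unless |theta| = omega; as xi2 tends to infinity its absolute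
   value eventually exceeds omega unless Z = 0, a null event. *)

lemma (in prob_space) indep_var_emeasure_pred_neq_0:
  assumes indep: "indep_var S X T Y"
    and pred: "Measurable.pred (S \<Otimes>\<^sub>M T) (\<lambda>(s, t). P s t)"
    and sections: "\<And>s. s \<in> space S \<Longrightarrow> emeasure M {x \<in> space M. P s (Y x)} \<noteq> 0"
  shows "emeasure M {x \<in> space M. P (X x) (Y x)} \<noteq> 0"
proof -
  from indep have X[measurable]: "random_variable S X" and Y[measurable]: "random_variable T Y"
    and joint: "distr M S X \<Otimes>\<^sub>M distr M T Y = distr M (S \<Otimes>\<^sub>M T) (\<lambda>x. (X x, Y x))"
    by (simp_all add: indep_var_distribution_eq)
  interpret X: prob_space "distr M S X" by (rule prob_space_distr) fact
  interpret Y: prob_space "distr M T Y" by (rule prob_space_distr) fact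
  define G where "G = {p \<in> space (S \<Otimes>\<^sub>M T). case p of (s, t) \<Rightarrow> P s t}"
  have G[measurable]: "G \<in> sets (S \<Otimes>\<^sub>M T)"
    unfolding G_def using pred by simp
  have section_eq: "emeasure (distr M T Y) (Pair s -` G) = emeasure M {x \<in> space M. P s (Y x)}"
    if "s \<in> space S" for s
  proof -
    have "Pair s -` G = {t \<in> space T. P s t}"
      using that by (auto simp: G_def space_pair_measure)
    moreover have "Y -` {t \<in> space T. P s t} \<inter> space M = {x \<in> space M. P s (Y x)}"
      using measurable_space[OF Y] by auto
    moreover have "{t \<in> space T. P s t} \<in> sets T"
      using G by (simp add: \<open>Pair s -` G = _\<close>[symmetric] sets_Pair1)
    ultimately show ?thesis
      by (simp add: emeasure_distr)
  qed
  have "{x \<in> space M. P (X x) (Y x)} = (\<lambda>x. (X x, Y x)) -` G \<inter> space M"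
    using measurable_space[OF X] measurable_space[OF Y] by (auto simp: G_def space_pair_measure)
  then have "emeasure M {x \<in> space M. P (X x) (Y x)} = emeasure (distr M (S \<Otimes>\<^sub>M T) (\<lambda>x. (X x, Y x))) G"
    by (simp add: emeasure_distr)
  also have "\<dots> = (\<integral>\<^sup>+s. emeasure (distr M T Y) (Pair s -` G) \<partial>distr M S X)"
    by (simp add: joint[symmetric] Y.emeasure_pair_measure_alt)
  also have "\<dots> \<noteq> 0"
  proof
    assume "(\<integral>\<^sup>+s. emeasure (distr M T Y) (Pair s -` G) \<partial>distr M S X) = 0"
    then have "AE s in distr M S X. emeasure (distr M T Y) (Pair s -` G) = 0"
      by (subst (asm) nn_integral_0_iff_AE) (auto intro: Y.measurable_emeasure_Pair)
    moreover have "AE s in distr M S X. emeasure (distr M T Y) (Pair s -` G) \<noteq> 0"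
      by (rule AE_I2) (simp add: section_eq sections)
    ultimately have "AE s in distr M S X. False"
      by eventually_elim simp
    then show False
      by simp
  qed
  finally show ?thesis .
qed

lemma distributed_emeasure_neq_0:
  fixes Z :: "'a \<Rightarrow> 'b::euclidean_space"
  assumes "distributed M lborel Z f" and "\<And>z. f z > 0"
    and "B \<in> sets borel" and "emeasure lborel B \<noteq> 0"
  shows "emeasure M (Z -` B \<inter> space M) \<noteq> 0"
proof -
  have "emeasure M (Z -` B \<inter> space M) = (\<integral>\<^sup>+z. f z * indicator B z \<partial>lborel)"
    using assms by (simp add: distributed_emeasure)
  moreover have "{z \<in> space lborel. f z * indicator B z \<noteq> 0} = B"
    using assms(2) by (auto simp: indicator_def less_le)
  moreover have "(\<lambda>z. f z * indicator B z) \<in> borel_measurable lborel"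
    using assms(1,3) by (auto dest: distributed_borel_measurable)
  ultimately show ?thesis
    using assms(4) by (simp add: nn_integral_0_iff)
qed

lemma distributed_AE_neq:
  fixes Z :: "'a \<Rightarrow> 'b::euclidean_space"
  assumes "distributed M lborel Z f"
  shows "AE x in M. Z x \<noteq> c"
proof -
  have "AE z in density lborel f. z \<noteq> c"
    using assms AE_lborel_singleton[of c]
    by (subst AE_density) (auto dest: distributed_borel_measurable)
  then have "AE z in distr M lborel Z. z \<noteq> c"
    unfolding distributed_distr_eq_density[OF assms] .
  then show ?thesis
    using assms by (subst (asm) AE_distr_iff) (auto dest: distributed_measurable)
qed

lemma indep_var_density_prob_pos:
  fixes X Z :: "'a \<Rightarrow> real"
  assumes "prob_space M" and "prob_space.indep_var M borel X borel Z"
    and "distributed M lborel Z f" and "\<And>z. f z > 0"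
    and "Measurable.pred (borel \<Otimes>\<^sub>M borel) (\<lambda>(t, z). P t z)"
    and "\<And>t. \<exists>a b. a < b \<and> (\<forall>z \<in> {a<..<b}. P t z)"
  shows "measure M {x \<in> space M. P (X x) (Z x)} > 0"
proof -
  interpret prob_space M by fact
  have Z: "Z \<in> borel_measurable M"
    using distributed_measurable[OF assms(3)] by simp
  have sections: "emeasure M {x \<in> space M. P t (Z x)} \<noteq> 0" for t
  proof -
    obtain a b where "a < b" and interval: "\<forall>z \<in> {a<..<b}. P t z"
      using assms(6) by blast
    have "Measurable.pred M (\<lambda>x. P t (Z x))"
      using measurable_compose[OF measurable_Pair[OF measurable_const Z] assms(5)] by simp
    then have "emeasure M (Z -` {a<..<b} \<inter> space M) \<le> emeasure M {x \<in> space M. P t (Z x)}"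
      using interval by (intro emeasure_mono) auto
    moreover have "emeasure M (Z -` {a<..<b} \<inter> space M) \<noteq> 0"
      using \<open>a < b\<close> by (intro distributed_emeasure_neq_0[OF assms(3,4)]) auto
    ultimately show ?thesis
      by (metis le_zero_eq)
  qed
  have "emeasure M {x \<in> space M. P (X x) (Z x)} \<noteq> 0"
    by (rule indep_var_emeasure_pred_neq_0[OF assms(2,5) sections])
  then show ?thesis
    by (simp add: emeasure_eq_measure zero_less_measure_iff)
qed

lemma relaxed_thr_eq_hard_thr: "(w < \<bar>u\<bar> \<longleftrightarrow> w < \<bar>t\<bar>) \<Longrightarrow> relaxed_thr w t u = hard_thr w t"
  by (simp add: relaxed_thr_def hard_thr_def)

lemma relaxed_thr_eq_self: "w < \<bar>u\<bar> \<Longrightarrow> relaxed_thr w t u = t"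
  by (simp add: relaxed_thr_def)

lemma soft_thr_theta_star: "w \<ge> 0 \<Longrightarrow> soft_thr w (theta_star w t) = t"
  by (auto simp: soft_thr_def theta_star_def sgn_if)

lemma interval_relaxed_thr_eq_self: "\<exists>a b. a < b \<and> (\<forall>z \<in> {a<..<b}. relaxed_thr w t (t + z) = t)"
  by (rule exI[of _ "\<bar>w\<bar> + \<bar>t\<bar>"], rule exI[of _ "\<bar>w\<bar> + \<bar>t\<bar> + 1"]) (auto intro!: relaxed_thr_eq_self)

lemma interval_relaxed_thr_eq_hard_thr:
  assumes "w > 0"
  shows "\<exists>a b. a < b \<and> (\<forall>z \<in> {a<..<b}. relaxed_thr w t (t + z) = hard_thr w t)"
proof (cases "w < \<bar>t\<bar>")
  case True
  then show ?thesis
    using interval_relaxed_thr_eq_self[of w t] by (simp add: relaxed_thr_def hard_thr_def)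
next
  case False
  then show ?thesis
    using assms by (intro exI[of _ "- w - t"] exI[of _ "w - t"]) (auto intro!: relaxed_thr_eq_hard_thr)
qed

lemma relaxed_thr_tendsto_hard_thr:
  assumes "\<bar>t\<bar> \<noteq> w"
  shows "((\<lambda>s. relaxed_thr w t (t + sqrt s * z)) \<longlongrightarrow> hard_thr w t) (at_right 0)"
proof -
  have "((\<lambda>s. \<bar>t + sqrt s * z\<bar>) \<longlongrightarrow> \<bar>t + sqrt 0 * z\<bar>) (at_right 0)"
    by (intro tendsto_intros tendsto_within_subset[OF tendsto_real_sqrt[OF tendsto_ident_at]]) auto
  then have noisy: "((\<lambda>s. \<bar>t + sqrt s * z\<bar>) \<longlongrightarrow> \<bar>t\<bar>) (at_right 0)"
    by simp
  have "eventually (\<lambda>s. w < \<bar>t + sqrt s * z\<bar> \<longleftrightarrow> w < \<bar>t\<bar>) (at_right 0)"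
  proof (cases "w < \<bar>t\<bar>")
    case True
    show ?thesis
      using order_tendstoD(1)[OF noisy True] by (rule eventually_mono) (simp add: True)
  next
    case False
    with assms have "\<bar>t\<bar> < w"
      by simp
    show ?thesis
      using order_tendstoD(2)[OF noisy \<open>\<bar>t\<bar> < w\<close>] by (rule eventually_mono) (simp add: False)
  qed
  then show ?thesis
    by (rule tendsto_eventually[OF eventually_mono]) (simp add: relaxed_thr_eq_hard_thr)
qed

lemma relaxed_thr_tendsto_self:
  assumes "z \<noteq> 0"
  shows "((\<lambda>s. relaxed_thr w t (t + sqrt s * z)) \<longlongrightarrow> t) at_top"
proof -
  have "filterlim (\<lambda>s. - \<bar>t\<bar> + sqrt s * \<bar>z\<bar>) at_top at_top"
    using assms
    by (intro filterlim_tendsto_add_at_top[OF tendsto_const]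
        filterlim_at_top_mult_tendsto_pos[OF tendsto_const _ sqrt_at_top]) simp
  then have "eventually (\<lambda>s. w < - \<bar>t\<bar> + sqrt s * \<bar>z\<bar>) at_top"
    by (rule filterlim_at_top_dense[THEN iffD1, rule_format])
  moreover have lower: "- \<bar>t\<bar> + sqrt s * \<bar>z\<bar> \<le> \<bar>t + sqrt s * z\<bar>" for s
    using abs_triangle_ineq2[of "sqrt s * z" "-t"] by (simp add: abs_mult)
  ultimately have "eventually (\<lambda>s. w < \<bar>t + sqrt s * z\<bar>) at_top"
    by (elim eventually_mono) (rule less_le_trans[OF _ lower])
  then show ?thesis
    by (rule tendsto_eventually[OF eventually_mono]) (simp add: relaxed_thr_eq_self)
qed

theorem proposition1:
  fixes M :: "'a measure" and \<theta> Z :: "'a \<Rightarrow> real" and \<omega> :: real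
  assumes "prob_space M"
    and "\<omega> > 0"
    and "\<theta> \<in> borel_measurable M"
    and "distributed M lborel Z std_normal_density"
    and "prob_space.indep_var M borel \<theta> borel Z"
  shows "(\<forall>\<epsilon>>0. \<exists>\<xi>2>0.
            measure M {x \<in> space M. \<bar>relaxed_thr \<omega> (\<theta> x) (\<theta> x + sqrt \<xi>2 * Z x)
                                       - hard_thr \<omega> (\<theta> x)\<bar> < \<epsilon>} > 0
          \<and> measure M {x \<in> space M. \<bar>relaxed_thr \<omega> (\<theta> x) (\<theta> x + sqrt \<xi>2 * Z x)
                                       - \<theta> x\<bar> < \<epsilon>} > 0
          \<and> measure M {x \<in> space M. \<bar>relaxed_thr \<omega> (\<theta> x) (\<theta> x + sqrt \<xi>2 * Z x)
                                       - soft_thr \<omega> (theta_star \<omega> (\<theta> x))\<bar> < \<epsilon>} > 0)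
       \<and> (AE x in M. \<bar>\<theta> x\<bar> \<noteq> \<omega> \<longrightarrow>
            ((\<lambda>\<xi>2. relaxed_thr \<omega> (\<theta> x) (\<theta> x + sqrt \<xi>2 * Z x))
               \<longlongrightarrow> hard_thr \<omega> (\<theta> x)) (at_right 0))
       \<and> (AE x in M.
            ((\<lambda>\<xi>2. relaxed_thr \<omega> (\<theta> x) (\<theta> x + sqrt \<xi>2 * Z x))
               \<longlongrightarrow> \<theta> x) at_top)"
proof -
  have density_pos: "\<And>z. ennreal (std_normal_density z) > 0"
    by (simp add: normal_density_pos)
  have prob_pos: "measure M {x \<in> space M. P (\<theta> x) (Z x)} > 0"
    if "Measurable.pred (borel \<Otimes>\<^sub>M borel) (\<lambda>(t, z). P t z)"
      and "\<And>t. \<exists>a b. a < b \<and> (\<forall>z \<in> {a<..<b}. P t z)" for P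
    using indep_var_density_prob_pos[OF assms(1,5,4) density_pos that] .
  have near_hard: "measure M {x \<in> space M. \<bar>relaxed_thr \<omega> (\<theta> x) (\<theta> x + Z x) - hard_thr \<omega> (\<theta> x)\<bar> < \<epsilon>} > 0"
    if "\<epsilon> > 0" for \<epsilon>
  proof (rule prob_pos)
    show "Measurable.pred (borel \<Otimes>\<^sub>M borel)
        (\<lambda>(t, z). \<bar>relaxed_thr \<omega> t (t + z) - hard_thr \<omega> t\<bar> < \<epsilon>)"
      unfolding relaxed_thr_def hard_thr_def by measurable
    show "\<exists>a b. a < b \<and> (\<forall>z \<in> {a<..<b}. \<bar>relaxed_thr \<omega> t (t + z) - hard_thr \<omega> t\<bar> < \<epsilon>)" for t
      using interval_relaxed_thr_eq_hard_thr[OF assms(2), of t] that by force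
  qed
  have near_self: "measure M {x \<in> space M. \<bar>relaxed_thr \<omega> (\<theta> x) (\<theta> x + Z x) - \<theta> x\<bar> < \<epsilon>} > 0"
    if "\<epsilon> > 0" for \<epsilon>
  proof (rule prob_pos)
    show "Measurable.pred (borel \<Otimes>\<^sub>M borel) (\<lambda>(t, z). \<bar>relaxed_thr \<omega> t (t + z) - t\<bar> < \<epsilon>)"
      unfolding relaxed_thr_def by measurable
    show "\<exists>a b. a < b \<and> (\<forall>z \<in> {a<..<b}. \<bar>relaxed_thr \<omega> t (t + z) - t\<bar> < \<epsilon>)" for t
      using interval_relaxed_thr_eq_self[of \<omega> t] that by force
  qed
  show ?thesis
  proof (intro conjI allI impI)
    show "AE x in M. \<bar>\<theta> x\<bar> \<noteq> \<omega> \<longrightarrow>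
            ((\<lambda>\<xi>2. relaxed_thr \<omega> (\<theta> x) (\<theta> x + sqrt \<xi>2 * Z x)) \<longlongrightarrow> hard_thr \<omega> (\<theta> x)) (at_right 0)"
      by (simp add: relaxed_thr_tendsto_hard_thr)
    show "AE x in M. ((\<lambda>\<xi>2. relaxed_thr \<omega> (\<theta> x) (\<theta> x + sqrt \<xi>2 * Z x)) \<longlongrightarrow> \<theta> x) at_top"
      using distributed_AE_neq[OF assms(4), of 0] by eventually_elim (rule relaxed_thr_tendsto_self)
  qed (use near_hard near_self assms(2) in \<open>intro exI[of _ 1]; simp add: soft_thr_theta_star\<close>)
qed

end
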